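(* For $n\ge 5$, any generating set of the semigroup $\mathbf{W}^{\ge 6}_{\mathrm{bf}}(n)$ has at least $(n-2)^{n-3}+(n-3)2^{n-3}-1$ elements.
   Context: Let $Q=\{0,\dots,n-1\}$ and $Q_M=\{1,\dots,n-3\}$. Transformations of $Q$ act on the right, $q(st)=(qs)t$. Let $\mathbf{B}_{\mathrm{bf}}(n)$ be the set of all transformations $t$ of $Q$ with $0\notin Qt$, $(n-1)t=n-1$, $(n-2)t=n-1$, and for all $j\ge1$, either $0t^j=n-1$ or $0t^j\ne qt^j$ for all $0<q<n-1$. Then $\mathbf{W}^{\ge 6}_{\mathrm{bf}}(n)=\{t\in\mathbf{B}_{\mathrm{bf}}(n)\mid 0t\in\{n-2,n-1\}$, or $0t\in Q_M$ and $qt\in\{n-2,n-1\}$ for all $q\in Q_M\}$, a semigroup under composition. *)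

theory Defs
  imports Main
begin

text \<open>Transformations of Q = {0..<n}, represented as functions nat => nat
  that map Q into Q and are the identity outside Q (canonical representative).\<close>
definition transf :: "nat \<Rightarrow> (nat \<Rightarrow> nat) set" where
  "transf n = {t. (\<forall>q<n. t q < n) \<and> (\<forall>q\<ge>n. t q = q)}"

text \<open>Right action: q (s t) = (q s) t, so the product s t is t o s.\<close>
definition tmul :: "(nat \<Rightarrow> nat) \<Rightarrow> (nat \<Rightarrow> nat) \<Rightarrow> (nat \<Rightarrow> nat)" where
  "tmul s t = t \<circ> s"

definition QM :: "nat \<Rightarrow> nat set" where
  "QM n = {1..n-3}"

definition Bbf :: "nat \<Rightarrow> (nat \<Rightarrow> nat) set" where
  "Bbf n = {t \<in> transf n.
     0 \<notin> t ` {0..<n} \<and> t (n-1) = n-1 \<and> t (n-2) = n-1 \<and>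
     (\<forall>j\<ge>1. (t ^^ j) 0 = n-1 \<or> (\<forall>q. 0 < q \<and> q < n-1 \<longrightarrow> (t ^^ j) 0 \<noteq> (t ^^ j) q))}"

definition Wbf6 :: "nat \<Rightarrow> (nat \<Rightarrow> nat) set" where
  "Wbf6 n = {t \<in> Bbf n. t 0 \<in> {n-2, n-1} \<or>
                (t 0 \<in> QM n \<and> (\<forall>q\<in>QM n. t q \<in> {n-2, n-1}))}"

inductive_set gen_sg :: "(nat \<Rightarrow> nat) set \<Rightarrow> (nat \<Rightarrow> nat) set" for G where
  base: "g \<in> G \<Longrightarrow> g \<in> gen_sg G"
| mul: "a \<in> gen_sg G \<Longrightarrow> b \<in> gen_sg G \<Longrightarrow> tmul a b \<in> gen_sg G"

end

theory Submission
  imports Defs "HOL-Library.FuncSet"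
begin

text \<open>
  A product \<open>t = tmul a b\<close> in \<open>Wbf6 n\<close> either sends \<open>0\<close> to \<open>n-1\<close> or collapses \<open>QM n\<close> onto
  \<open>n-1\<close>: if \<open>a\<close> sends \<open>0\<close> to \<open>n-2\<close> or \<open>n-1\<close> then so does \<open>a\<close> followed by \<open>b\<close>, and otherwise
  \<open>a\<close> sends \<open>QM n\<close> into \<open>{n-2, n-1}\<close>, which \<open>b\<close> sends to \<open>n-1\<close>. Hence every element doing
  neither of these is indecomposable and lies in any generating set; there are
  \<open>(n-2)^(n-3) - 1\<close> of them with \<open>0 \<mapsto> n-2\<close> and \<open>(n-3)(2^(n-3) - 1)\<close> with \<open>0 \<mapsto> QM n\<close>.
  Moreover, for each \<open>k \<in> QM n\<close>, the class of elements sending \<open>0\<close> to \<open>n-1\<close> and \<open>QM n\<close>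
  bijectively onto \<open>QM n - {k} \<union> {n-2}\<close> is inherited by right factors, since the left factor
  must then permute \<open>QM n\<close>. So each of these \<open>n-3\<close> disjoint classes contains a generator too.
\<close>

lemma gen_sg_indecomposable:
  assumes "u \<in> gen_sg G"
    and "\<And>a b. a \<in> gen_sg G \<Longrightarrow> b \<in> gen_sg G \<Longrightarrow> tmul a b \<noteq> u"
  shows "u \<in> G"
  using assms by (cases rule: gen_sg.cases) auto

lemma gen_sg_right_factor_property:
  assumes "u \<in> gen_sg G" and "P u"
    and "\<And>a b. a \<in> gen_sg G \<Longrightarrow> b \<in> gen_sg G \<Longrightarrow> P (tmul a b) \<Longrightarrow> P b"
  shows "\<exists>g\<in>G. P g"
  using assms(1,2) by (induction rule: gen_sg.induct) (auto intro: assms(3))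

lemma QM_bounds: "q \<in> QM n \<Longrightarrow> 0 < q \<and> q < n - 2"
  by (auto simp: QM_def)

lemma not_in_QM: "0 \<notin> QM n" "n - 2 \<notin> QM n" "n - 1 \<notin> QM n"
  by (auto simp: QM_def)

lemma finite_QM [simp]: "finite (QM n)"
  by (simp add: QM_def)

lemma card_QM: "card (QM n) = n - 3"
  by (simp add: QM_def)

lemma QM_two_elements: "n \<ge> 5 \<Longrightarrow> \<exists>q\<in>QM n. q \<noteq> k"
  by (rule bexI[of _ "if k = 1 then 2 else 1"]) (auto simp: QM_def)

lemma interior_cases: "0 < q \<Longrightarrow> q < n - 1 \<Longrightarrow> q \<in> QM n \<or> q = n - 2"
  by (auto simp: QM_def)

lemma finite_transf: "finite (transf n)"
proof -
  have "transf n \<subseteq> (\<lambda>f q. if q < n then f q else q) ` (\<Pi>\<^sub>E q\<in>{..<n}. {..<n})"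
  proof
    fix t assume t: "t \<in> transf n"
    then have "t = (\<lambda>q. if q < n then restrict t {..<n} q else q)"
      by (auto simp: transf_def)
    moreover have "restrict t {..<n} \<in> (\<Pi>\<^sub>E q\<in>{..<n}. {..<n})"
      using t by (auto simp: transf_def)
    ultimately show "t \<in> (\<lambda>f q. if q < n then f q else q) ` (\<Pi>\<^sub>E q\<in>{..<n}. {..<n})"
      by blast
  qed
  then show ?thesis
    by (rule finite_subset) (simp add: finite_PiE)
qed

lemma finite_Wbf6: "finite (Wbf6 n)"
  by (rule finite_subset[OF _ finite_transf]) (auto simp: Wbf6_def Bbf_def)

lemma Wbf6_D:
  assumes "t \<in> Wbf6 n"
  shows "q < n \<Longrightarrow> t q \<noteq> 0" and "q < n \<Longrightarrow> t q < n"
    and "t (n-1) = n-1" and "t (n-2) = n-1"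
    and "t 0 \<in> {n-2, n-1} \<or> (t 0 \<in> QM n \<and> (\<forall>q\<in>QM n. t q \<in> {n-2, n-1}))"
    and "t 0 = n-1 \<or> (\<forall>q. 0 < q \<and> q < n-1 \<longrightarrow> t 0 \<noteq> t q)"
proof -
  have t: "t \<in> Bbf n" using assms by (simp add: Wbf6_def)
  then show "q < n \<Longrightarrow> t q \<noteq> 0" "q < n \<Longrightarrow> t q < n" "t (n-1) = n-1" "t (n-2) = n-1"
    by (auto simp: Bbf_def transf_def)
  show "t 0 \<in> {n-2, n-1} \<or> (t 0 \<in> QM n \<and> (\<forall>q\<in>QM n. t q \<in> {n-2, n-1}))"
    using assms by (simp add: Wbf6_def)
  have "\<forall>j\<ge>1. (t ^^ j) 0 = n-1 \<or> (\<forall>q. 0 < q \<and> q < n-1 \<longrightarrow> (t ^^ j) 0 \<noteq> (t ^^ j) q)"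
    using t by (simp add: Bbf_def)
  then show "t 0 = n-1 \<or> (\<forall>q. 0 < q \<and> q < n-1 \<longrightarrow> t 0 \<noteq> t q)"
    by (metis One_nat_def funpow.simps(2) funpow_0 comp_apply le_refl)
qed

lemma funpow_fixed_point: "t y = y \<Longrightarrow> (t ^^ j) y = y"
  by (induction j) auto

lemma Bbf_intro:
  assumes "t \<in> transf n" and "\<forall>q<n. t q \<noteq> 0" and "t (n-1) = n-1" and "t (n-2) = n-1"
    and one_step: "t 0 = n-1 \<or> (\<forall>q. 0 < q \<and> q < n-1 \<longrightarrow> t 0 \<noteq> t q)"
    and two_steps: "t (t 0) = n-1 \<or> (\<forall>q. 0 < q \<and> q < n-1 \<longrightarrow> t (t q) = n-1)"
  shows "t \<in> Bbf n"
proof -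
  have "(t ^^ j) 0 = n-1 \<or> (\<forall>q. 0 < q \<and> q < n-1 \<longrightarrow> (t ^^ j) 0 \<noteq> (t ^^ j) q)"
    if "j \<ge> 1" for j
  proof (cases "j = 1")
    case True
    with one_step show ?thesis by simp
  next
    case False
    with that obtain i where "j = Suc (Suc i)"
      by (metis One_nat_def Suc_le_D le_SucE)
    then have iter: "(t ^^ j) x = (t ^^ i) (t (t x))" for x
      by (simp add: funpow_Suc_right del: funpow.simps)
    have sink: "(t ^^ i) (n-1) = n-1"
      using funpow_fixed_point \<open>t (n-1) = n-1\<close> .
    from two_steps show ?thesis
    proof
      assume "t (t 0) = n-1"
      then show ?thesis using sink by (simp add: iter)
    next
      assume "\<forall>q. 0 < q \<and> q < n-1 \<longrightarrow> t (t q) = n-1"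
      then show ?thesis using sink by (simp add: iter)
    qed
  qed
  with assms(1-4) show ?thesis
    unfolding Bbf_def by auto
qed

lemma tmul_Wbf6_collapses:
  assumes a: "a \<in> Wbf6 n" and b: "b \<in> Wbf6 n"
  shows "tmul a b 0 = n-1 \<or> (\<forall>q\<in>QM n. tmul a b q = n-1)"
  using Wbf6_D(5)[OF a] Wbf6_D(3,4)[OF b] by (auto simp: tmul_def)

definition Wbf6_atoms :: "nat \<Rightarrow> (nat \<Rightarrow> nat) set" where
  "Wbf6_atoms n = {u \<in> Wbf6 n. u 0 \<noteq> n-1 \<and> (\<exists>q\<in>QM n. u q \<noteq> n-1)}"

lemma Wbf6_atoms_subset_generators:
  assumes "gen_sg G = Wbf6 n"
  shows "Wbf6_atoms n \<subseteq> G"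
proof
  fix u assume u: "u \<in> Wbf6_atoms n"
  show "u \<in> G"
  proof (rule gen_sg_indecomposable)
    show "u \<in> gen_sg G" using u assms by (simp add: Wbf6_atoms_def)
    fix a b assume "a \<in> gen_sg G" "b \<in> gen_sg G"
    then show "tmul a b \<noteq> u"
      using tmul_Wbf6_collapses[of a n b] u assms by (auto simp: Wbf6_atoms_def)
  qed
qed

definition mk_transf :: "nat \<Rightarrow> nat \<Rightarrow> (nat \<Rightarrow> nat) \<Rightarrow> nat \<Rightarrow> nat" where
  "mk_transf n c f q = (if q = 0 then c else if q \<in> QM n then f q else if q < n then n-1 else q)"

lemma mk_transf_simps:
  assumes "n \<ge> 3"
  shows "mk_transf n c f 0 = c" and "q \<in> QM n \<Longrightarrow> mk_transf n c f q = f q"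
    and "mk_transf n c f (n-1) = n-1" and "mk_transf n c f (n-2) = n-1"
  using assms by (auto simp: mk_transf_def QM_def)

lemma mk_transf_interior:
  assumes "n \<ge> 3" and "0 < q" and "q < n-1"
  shows "mk_transf n c f q \<in> insert (n-1) (f ` QM n)"
  using interior_cases[OF assms(2,3)] mk_transf_simps[OF assms(1), where c=c and f=f] by auto

lemma mk_transf_basic:
  assumes "n \<ge> 3" and "c \<in> {1..<n}" and "f ` QM n \<subseteq> {1..<n}"
  shows "mk_transf n c f \<in> transf n" and "\<forall>q<n. mk_transf n c f q \<noteq> 0"
  using assms QM_bounds by (fastforce simp: transf_def mk_transf_def)+

lemma mk_transf_eq_iff:
  assumes "f \<in> extensional (QM n)" and "f' \<in> extensional (QM n)"
  shows "mk_transf n c f = mk_transf n c' f' \<longleftrightarrow> c = c' \<and> f = f'"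
proof
  assume eq: "mk_transf n c f = mk_transf n c' f'"
  have "c = c'" using fun_cong[OF eq, of 0] by (simp add: mk_transf_def)
  moreover have "f = f'"
  proof (rule extensionalityI[OF assms])
    fix q assume "q \<in> QM n"
    then show "f q = f' q"
      using fun_cong[OF eq, of q] QM_bounds[of q n] by (simp add: mk_transf_def)
  qed
  ultimately show "c = c' \<and> f = f'" ..
qed simp

lemma mk_transf_n2_in_Wbf6:
  assumes n: "n \<ge> 5" and f: "f ` QM n \<subseteq> insert (n-1) (QM n)"
  shows "mk_transf n (n-2) f \<in> Wbf6 n"
proof -
  let ?t = "mk_transf n (n-2) f"
  note t = mk_transf_simps[where c="n-2" and f=f]
  have "f ` QM n \<subseteq> {1..<n}" using f n QM_bounds by fastforce
  moreover have "\<forall>q. 0 < q \<and> q < n-1 \<longrightarrow> ?t 0 \<noteq> ?t q"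
  proof (intro allI impI)
    fix q assume "0 < q \<and> q < n-1"
    then have "?t q \<in> insert (n-1) (f ` QM n)" using n by (intro mk_transf_interior) auto
    moreover have "n-2 \<notin> insert (n-1) (f ` QM n)" using f n not_in_QM[of n] by auto
    ultimately show "?t 0 \<noteq> ?t q" using n t by auto
  qed
  moreover have "?t (?t 0) = n-1" using n t by simp
  ultimately have "?t \<in> Bbf n"
    using n t by (intro Bbf_intro mk_transf_basic) auto
  then show ?thesis using n t by (simp add: Wbf6_def)
qed

lemma mk_transf_QM_in_Wbf6:
  assumes n: "n \<ge> 5" and c: "c \<in> QM n" and f: "f ` QM n \<subseteq> {n-2, n-1}"
  shows "mk_transf n c f \<in> Wbf6 n"
proof -
  let ?t = "mk_transf n c f"
  note t = mk_transf_simps[where c=c and f=f]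
  have interior: "?t q \<in> {n-2, n-1}" if "0 < q \<and> q < n-1" for q
    using f n that mk_transf_interior[of n q c f] by auto
  have "c \<in> {1..<n}" "f ` QM n \<subseteq> {1..<n}" using c f n QM_bounds by fastforce+
  moreover have "\<forall>q. 0 < q \<and> q < n-1 \<longrightarrow> ?t 0 \<noteq> ?t q"
    using interior c n t not_in_QM[of n] by fastforce
  moreover have "\<forall>q. 0 < q \<and> q < n-1 \<longrightarrow> ?t (?t q) = n-1"
    using interior n t by fastforce
  ultimately have "?t \<in> Bbf n"
    using n t by (intro Bbf_intro mk_transf_basic) auto
  then show ?thesis using n c f t by (auto simp: Wbf6_def)
qed

lemma mk_transf_in_Wbf6_atoms:
  assumes n: "n \<ge> 5" and f: "\<exists>q\<in>QM n. f q \<noteq> n-1"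
    and shape: "(c = n-2 \<and> f ` QM n \<subseteq> insert (n-1) (QM n)) \<or> (c \<in> QM n \<and> f ` QM n \<subseteq> {n-2, n-1})"
  shows "mk_transf n c f \<in> Wbf6_atoms n"
proof -
  have "mk_transf n c f \<in> Wbf6 n"
    using shape mk_transf_n2_in_Wbf6[OF n] mk_transf_QM_in_Wbf6[OF n] by blast
  moreover have "c \<noteq> n-1"
    using shape n not_in_QM[of n] by auto
  ultimately show ?thesis
    using f n mk_transf_simps[where c=c and f=f] by (auto simp: Wbf6_atoms_def)
qed

lemma card_Wbf6_atoms:
  assumes n: "n \<ge> 5"
  shows "(n-2)^(n-3) - 1 + (n-3) * (2^(n-3) - 1) \<le> card (Wbf6_atoms n)"
proof -
  define sink where "sink = (\<lambda>q\<in>QM n. n-1)"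
  define F1 where "F1 = (\<Pi>\<^sub>E q\<in>QM n. insert (n-1) (QM n)) - {sink}"
  define F2 where "F2 = (\<Pi>\<^sub>E q\<in>QM n. {n-2, n-1}) - {sink}"
  define A where "A = {n-2} \<times> F1 \<union> QM n \<times> F2"
  have not_sink: "\<exists>q\<in>QM n. f q \<noteq> n-1" if "f \<in> F1 \<union> F2" for f
  proof (rule ccontr)
    assume "\<not> (\<exists>q\<in>QM n. f q \<noteq> n-1)"
    then have "f = sink"
      using that by (intro extensionalityI[of f "QM n"]) (auto simp: F1_def F2_def sink_def PiE_iff)
    then show False using that by (simp add: F1_def F2_def)
  qed
  have "inj_on (\<lambda>(c, f). mk_transf n c f) A"
    by (rule inj_onI) (auto simp: mk_transf_eq_iff A_def F1_def F2_def PiE_iff)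
  moreover have "(\<lambda>(c, f). mk_transf n c f) ` A \<subseteq> Wbf6_atoms n"
  proof clarify
    fix c f assume "(c, f) \<in> A"
    with not_sink show "mk_transf n c f \<in> Wbf6_atoms n"
      by (intro mk_transf_in_Wbf6_atoms[OF n]) (auto simp: A_def F1_def F2_def)
  qed
  moreover have "finite (Wbf6_atoms n)"
    using finite_Wbf6 by (auto simp: Wbf6_atoms_def)
  ultimately have "card A \<le> card (Wbf6_atoms n)"
    by (rule card_inj_on_le)
  moreover have "card F1 = (n-2)^(n-3) - 1"
  proof -
    have "card (insert (n-1) (QM n)) = n-2" using n not_in_QM[of n] by (simp add: card_QM)
    then show ?thesis
      by (simp add: F1_def sink_def card_Diff_singleton card_PiE card_QM finite_PiE)
  qed
  moreover have "card F2 = 2^(n-3) - 1"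
  proof -
    have "card {n-2, n-1} = 2" using n by simp
    then show ?thesis
      by (simp add: F2_def sink_def card_Diff_singleton card_PiE card_QM finite_PiE)
  qed
  moreover have "card A = card F1 + (n-3) * card F2"
    using not_in_QM[of n] unfolding A_def
    by (subst card_Un_disjoint) (auto simp: card_cartesian_product card_QM F1_def F2_def finite_PiE)
  ultimately show ?thesis by simp
qed

definition miss_class :: "nat \<Rightarrow> nat \<Rightarrow> (nat \<Rightarrow> nat) set" where
  "miss_class n k =
     {u \<in> Wbf6 n. u 0 = n-1 \<and> inj_on u (QM n) \<and> u ` QM n = insert (n-2) (QM n - {k})}"

lemma mk_transf_miss_class:
  assumes n: "n \<ge> 5" and k: "k \<in> QM n"
  shows "mk_transf n (n-1) (\<lambda>q. if q = k then n-2 else q) \<in> miss_class n k"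
    (is "?t \<in> _")
proof -
  define f where "f = (\<lambda>q::nat. if q = k then n-2 else q)"
  note t = mk_transf_simps[where c="n-1" and f=f]
  have "f ` QM n \<subseteq> {1..<n}" using QM_bounds by (fastforce simp: f_def)
  then have "?t \<in> Bbf n"
    using n t unfolding f_def by (intro Bbf_intro mk_transf_basic) auto
  moreover have "inj_on f (QM n)"
    using not_in_QM[of n] by (auto intro!: inj_onI simp: f_def split: if_splits)
  then have "inj_on ?t (QM n)"
    using n t unfolding f_def by (simp cong: inj_on_cong)
  moreover have "?t ` QM n = f ` QM n"
    using n t unfolding f_def by (simp cong: image_cong)
  moreover have "f ` QM n = insert (n-2) (QM n - {k})"
    using k by (auto simp: f_def)
  ultimately show ?thesis
    using n t by (auto simp: miss_class_def Wbf6_def f_def)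
qed

lemma left_factor_permutes_QM:
  assumes a: "a \<in> Wbf6 n" and b: "b \<in> Wbf6 n"
    and inj: "inj_on (tmul a b) (QM n)" and no_sink: "n-1 \<notin> tmul a b ` QM n"
  shows "a ` QM n = QM n"
proof (rule endo_inj_surj)
  show "a ` QM n \<subseteq> QM n"
  proof
    fix x assume "x \<in> a ` QM n"
    then obtain q where q: "q \<in> QM n" "x = a q" by blast
    then have "a q \<noteq> 0" "a q < n" using Wbf6_D(1,2)[OF a] QM_bounds by force+
    moreover have "b (a q) \<noteq> n-1"
      using no_sink q by (metis comp_apply image_eqI tmul_def)
    then have "a q \<noteq> n-2" "a q \<noteq> n-1"
      using Wbf6_D(3,4)[OF b] by auto
    ultimately show "x \<in> QM n" using q by (auto simp: QM_def)
  qed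
  show "inj_on a (QM n)" using inj inj_on_imageI2 by (metis tmul_def)
qed simp

lemma miss_class_right_factor:
  assumes n: "n \<ge> 5" and a: "a \<in> Wbf6 n" and b: "b \<in> Wbf6 n"
    and ab: "tmul a b \<in> miss_class n k"
  shows "b \<in> miss_class n k"
proof -
  have inj: "inj_on (tmul a b) (QM n)"
    and img: "tmul a b ` QM n = insert (n-2) (QM n - {k})"
    using ab by (auto simp: miss_class_def)
  moreover have "n-1 \<notin> tmul a b ` QM n"
    using img n not_in_QM[of n] by auto
  ultimately have "a ` QM n = QM n"
    using left_factor_permutes_QM[OF a b] by blast
  then have b_inj: "inj_on b (QM n)"
    using inj inj_on_imageI[of b a "QM n"] by (simp add: tmul_def)
  have "tmul a b ` QM n = b ` a ` QM n"
    by (simp add: tmul_def image_comp)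
  with img \<open>a ` QM n = QM n\<close> have b_img: "b ` QM n = insert (n-2) (QM n - {k})"
    by simp
  have "b 0 = n-1"
  proof (rule ccontr)
    assume b0: "b 0 \<noteq> n-1"
    from Wbf6_D(5)[OF b] b0 consider "b 0 = n-2" | "\<forall>q\<in>QM n. b q \<in> {n-2, n-1}"
      by auto
    then show False
    proof cases
      case 1
      obtain q where "q \<in> QM n" "b q = n-2" using b_img by (metis imageE insertI1)
      then show False
        using Wbf6_D(6)[OF b] b0 1 QM_bounds[of q n] by force
    next
      case 2
      obtain q' where "q' \<in> QM n" "q' \<noteq> k" using QM_two_elements[OF n] by blast
      then obtain q where "q \<in> QM n" "b q = q'" using b_img by (metis DiffI imageE insertCI singletonD)
      with 2 \<open>q' \<in> QM n\<close> not_in_QM[of n] show False by auto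
    qed
  qed
  then show ?thesis
    using b b_inj b_img by (simp add: miss_class_def)
qed

lemma miss_class_meets_generators:
  assumes n: "n \<ge> 5" and k: "k \<in> QM n" and gen: "gen_sg G = Wbf6 n"
  shows "\<exists>g\<in>G. g \<in> miss_class n k"
proof (rule gen_sg_right_factor_property)
  show "mk_transf n (n-1) (\<lambda>q. if q = k then n-2 else q) \<in> gen_sg G"
    using mk_transf_miss_class[OF n k] gen by (simp add: miss_class_def)
qed (use mk_transf_miss_class[OF n k] miss_class_right_factor[OF n] gen in auto)

lemma miss_class_disjoint:
  assumes "k' \<in> QM n" and "k \<noteq> k'"
  shows "miss_class n k \<inter> miss_class n k' = {}"
proof -
  have "k' \<in> insert (n-2) (QM n - {k})" and "k' \<notin> insert (n-2) (QM n - {k'})"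
    using assms not_in_QM[of n] by auto
  then show ?thesis
    unfolding miss_class_def by blast
qed

lemma generators_in_miss_classes:
  assumes n: "n \<ge> 5" and gen: "gen_sg G = Wbf6 n"
  obtains H where "H \<subseteq> G" and "card H = n-3" and "\<forall>u\<in>H. u 0 = n-1"
proof -
  have "\<forall>k\<in>QM n. \<exists>g. g \<in> G \<and> g \<in> miss_class n k"
    using miss_class_meets_generators[OF n _ gen] by blast
  then obtain h where h: "\<forall>k\<in>QM n. h k \<in> G \<and> h k \<in> miss_class n k"
    by (metis bchoice)
  have "inj_on h (QM n)"
  proof (rule inj_onI)
    fix k k' assume "k \<in> QM n" "k' \<in> QM n" "h k = h k'"
    then have "h k \<in> miss_class n k \<inter> miss_class n k'"
      using h by (metis IntI)
    then show "k = k'"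
      using miss_class_disjoint[OF \<open>k' \<in> QM n\<close>] by blast
  qed
  then have "card (h ` QM n) = n-3"
    by (simp add: card_image card_QM)
  moreover have "h ` QM n \<subseteq> G" and "\<forall>u\<in>h ` QM n. u 0 = n-1"
    using h by (auto simp: miss_class_def)
  ultimately show ?thesis
    using that by blast
qed

theorem mainTheorem8:
  fixes n :: nat and G :: "(nat \<Rightarrow> nat) set"
  assumes "n \<ge> 5"
    and "G \<subseteq> Wbf6 n"
    and "gen_sg G = Wbf6 n"
  shows "card G \<ge> (n-2)^(n-3) + (n-3) * 2^(n-3) - 1"
proof -
  obtain H where H: "H \<subseteq> G" "card H = n-3" "\<forall>u\<in>H. u 0 = n-1"
    using generators_in_miss_classes[OF assms(1,3)] .
  have generators: "Wbf6_atoms n \<union> H \<subseteq> G"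
    using H(1) Wbf6_atoms_subset_generators[OF assms(3)] by blast
  have "finite G"
    using finite_subset[OF assms(2) finite_Wbf6] .
  then have "finite (Wbf6_atoms n)" "finite H"
    using generators by (auto intro: finite_subset)
  moreover have "Wbf6_atoms n \<inter> H = {}"
    using H(3) by (auto simp: Wbf6_atoms_def)
  ultimately have "card (Wbf6_atoms n) + (n-3) = card (Wbf6_atoms n \<union> H)"
    using H(2) by (simp add: card_Un_disjoint)
  also have "\<dots> \<le> card G"
    using card_mono[OF \<open>finite G\<close> generators] .
  finally have "card (Wbf6_atoms n) + (n-3) \<le> card G" .
  moreover have "(n-3) * (2^(n-3) - 1) + (n-3) = (n-3) * 2^(n-3)"
    by (simp add: diff_mult_distrib2 le_add_diff_inverse2)
  moreover have "(n-2)^(n-3) \<ge> 1"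
    using assms(1) by simp
  ultimately show ?thesis
    using card_Wbf6_atoms[OF assms(1)] by linarith
qed

end
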